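(* Let $A\colon X\to Y$ be a compact linear operator between separable Hilbert spaces with infinite-dimensional range, where $X=L^2(\mathcal{M})$, with singular value decomposition $Ax=\sum_{n=1}^\infty\sigma_n\langle x,v_n\rangle_X u_n$ such that $v_n\in L^\infty(\mathcal{M})$ for all $n\in\mathbb{N}$ and $$\sum_{n=1}^\infty\sigma_n^\eta\|v_n\|_{L^\infty(\mathcal{M})}^2<\infty$$ for some $\eta>0$. For a real sequence $(c_n)$ and $\alpha>0$ let $T^c_\alpha y=\sum_{n=1}^\infty\frac{\sigma_n}{\sigma_n^2+\alpha c_n}\langle y,u_n\rangle_Y v_n$. If $\eta\le2$, then for any sequence with $c_n\ge c_0>0$ for all $n$, the operator $T^c_\alpha\colon Y\to L^\infty(\mathcal{M})$ is bounded. If $\eta>2$, then for any sequence with $c_n\ge C\sigma_n^{1-\eta/2}$ for all $n$, with an arbitrary constant $C>0$, the operator $T^c_\alpha\colon Y\to L^\infty(\mathcal{M})$ is bounded. In both cases there is $C'>0$ independent of $\alpha$ such that $$\|T^c_\alpha\|_{Y\to L^\infty(\mathcal{M})}\le\frac{C'}{\alpha}\qquad\text{for all }\alpha>0.$$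
   Context: $\mathcal{M}$ is a measure space. The SVD consists of orthonormal systems $(u_n)$ in $Y$ and $(v_n)$ in $X$ and a non-increasing sequence $(\sigma_n)$ of positive reals with $\sigma_n\to0$. *)

theory Defs
  imports "HOL-Probability.Probability"
begin

definition L2 :: "'a measure \<Rightarrow> ('a \<Rightarrow> real) set" where
  "L2 M = {f. f \<in> borel_measurable M \<and> integrable M (\<lambda>x. (f x)\<^sup>2)}"

definition L2_inner :: "'a measure \<Rightarrow> ('a \<Rightarrow> real) \<Rightarrow> ('a \<Rightarrow> real) \<Rightarrow> real" where
  "L2_inner M f g = (\<integral>x. f x * g x \<partial>M)"

definition Linf :: "'a measure \<Rightarrow> ('a \<Rightarrow> real) set" where
  "Linf M = {f. f \<in> borel_measurable M \<and> esssup M (\<lambda>x. ereal \<bar>f x\<bar>) < \<infinity>}"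

definition Linf_norm :: "'a measure \<Rightarrow> ('a \<Rightarrow> real) \<Rightarrow> real" where
  "Linf_norm M f = real_of_ereal (esssup M (\<lambda>x. ereal \<bar>f x\<bar>))"

definition L2_separable :: "'a measure \<Rightarrow> bool" where
  "L2_separable M \<longleftrightarrow> (\<exists>D. countable D \<and> D \<subseteq> L2 M \<and>
     (\<forall>f\<in>L2 M. \<forall>e>0. \<exists>g\<in>D. (\<integral>x. (f x - g x)\<^sup>2 \<partial>M) < e))"

definition L2_limit :: "'a measure \<Rightarrow> (nat \<Rightarrow> 'a \<Rightarrow> real) \<Rightarrow> ('a \<Rightarrow> real) \<Rightarrow> bool" where
  "L2_limit M S f \<longleftrightarrow> f \<in> L2 M \<and>
     (\<lambda>N. \<integral>x. (f x - S N x)\<^sup>2 \<partial>M) \<longlonglongrightarrow> 0"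

text \<open>f is (a representative of) T^c_alpha y, i.e. the L2-sum of the series
  sum_n sigma_n/(sigma_n^2 + alpha c_n) <y,u_n> v_n.\<close>
definition Tc_rep :: "'a measure \<Rightarrow> (nat \<Rightarrow> real) \<Rightarrow> (nat \<Rightarrow> 'b::real_inner) \<Rightarrow>
    (nat \<Rightarrow> 'a \<Rightarrow> real) \<Rightarrow> (nat \<Rightarrow> real) \<Rightarrow> real \<Rightarrow> 'b \<Rightarrow> ('a \<Rightarrow> real) \<Rightarrow> bool" where
  "Tc_rep M \<sigma> u v c \<alpha> y f \<longleftrightarrow>
     L2_limit M (\<lambda>N x. \<Sum>n<N. \<sigma> n / ((\<sigma> n)\<^sup>2 + \<alpha> * c n) * (y \<bullet> u n) * v n x) f"

end

theory Submission
  imports Defs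
begin

text \<open>
  Write \<open>a\<^sub>n = \<sigma>\<^sub>n / (\<sigma>\<^sub>n\<^sup>2 + \<alpha> c\<^sub>n) \<langle>y, u\<^sub>n\<rangle>\<close>. Since
  \<open>|a\<^sub>n| \<le> |\<langle>y, u\<^sub>n\<rangle>| \<sigma>\<^sub>n / (\<alpha> c\<^sub>n)\<close> and \<open>|v\<^sub>n| \<le> \<parallel>v\<^sub>n\<parallel>\<^sub>\<infinity>\<close> a.e.,
  Cauchy-Schwarz and Bessel's inequality bound every partial sum of \<open>\<Sum> |a\<^sub>n v\<^sub>n(x)|\<close> by
  \<open>\<parallel>y\<parallel> / \<alpha> \<cdot> (\<Sum> (\<sigma>\<^sub>n / c\<^sub>n)\<^sup>2 \<parallel>v\<^sub>n\<parallel>\<^sub>\<infinity>\<^sup>2)\<^sup>1\<^sup>/\<^sup>2\<close>; the hypotheses on \<open>c\<close> give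
  \<open>(\<sigma>\<^sub>n / c\<^sub>n)\<^sup>2 \<le> K \<sigma>\<^sub>n\<^sup>\<eta>\<close>, so this is finite by the summability assumption.
  Hence the series converges absolutely a.e.; by orthonormality of \<open>(v\<^sub>n)\<close> and Fatou's lemma
  its pointwise limit is also its \<open>L\<^sup>2\<close> limit, and an
  \<open>L\<^sup>2\<close> limit of functions bounded a.e. by \<open>B\<close> is bounded a.e. by \<open>B\<close>.
\<close>

section \<open>Square-integrable and essentially bounded functions\<close>

lemma L2_integrable_mult:
  assumes "f \<in> L2 M" "g \<in> L2 M"
  shows "integrable M (\<lambda>x. f x * g x)"
proof (rule Bochner_Integration.integrable_bound)
  show "integrable M (\<lambda>x. (f x)\<^sup>2 + (g x)\<^sup>2)"
    using assms unfolding L2_def by auto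
  show "(\<lambda>x. f x * g x) \<in> borel_measurable M"
    using assms unfolding L2_def by auto
  have "\<bar>f x * g x\<bar> \<le> (f x)\<^sup>2 + (g x)\<^sup>2" for x
  proof -
    have "2 * (\<bar>f x\<bar> * \<bar>g x\<bar>) \<le> (f x)\<^sup>2 + (g x)\<^sup>2"
      using sum_squares_bound[of "\<bar>f x\<bar>" "\<bar>g x\<bar>"] by (simp add: mult.assoc)
    moreover have "0 \<le> \<bar>f x\<bar> * \<bar>g x\<bar>" by simp
    ultimately show ?thesis unfolding abs_mult by linarith
  qed
  then show "AE x in M. norm (f x * g x) \<le> norm ((f x)\<^sup>2 + (g x)\<^sup>2)"
    by simp
qed

lemma L2_integrable_square_diff:
  assumes "f \<in> L2 M" "g \<in> L2 M"
  shows "integrable M (\<lambda>x. (f x - g x)\<^sup>2)"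
proof -
  have "(\<lambda>x. (f x - g x)\<^sup>2) = (\<lambda>x. (f x)\<^sup>2 + (g x)\<^sup>2 - 2 * (f x * g x))"
    by (simp add: power2_diff algebra_simps)
  then show ?thesis
    using assms L2_integrable_mult[OF assms] unfolding L2_def by auto
qed

lemma L2_sum:
  assumes "\<And>n. n \<in> I \<Longrightarrow> v n \<in> L2 M"
  shows "(\<lambda>x. \<Sum>n\<in>I. a n * v n x) \<in> L2 M"
proof -
  have "(\<lambda>x. (\<Sum>n\<in>I. a n * v n x)\<^sup>2) = (\<lambda>x. \<Sum>n\<in>I. \<Sum>m\<in>I. a n * a m * (v n x * v m x))"
    by (auto simp: power2_eq_square sum_product algebra_simps)
  moreover have "integrable M (\<lambda>x. \<Sum>n\<in>I. \<Sum>m\<in>I. a n * a m * (v n x * v m x))"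
    using assms by (simp add: L2_integrable_mult)
  moreover have "(\<lambda>x. \<Sum>n\<in>I. a n * v n x) \<in> borel_measurable M"
    using assms unfolding L2_def by (auto intro!: borel_measurable_sum borel_measurable_times)
  ultimately show ?thesis
    unfolding L2_def by simp
qed

lemma integral_square_orthonormal_sum:
  assumes v_L2: "\<And>n. v n \<in> L2 M"
    and v_orthonormal: "\<And>n m. L2_inner M (v n) (v m) = (if n = m then 1 else 0)"
    and "finite I"
  shows "(\<integral>x. (\<Sum>n\<in>I. a n * v n x)\<^sup>2 \<partial>M) = (\<Sum>n\<in>I. (a n)\<^sup>2)"
proof -
  have "(\<integral>x. (\<Sum>n\<in>I. a n * v n x)\<^sup>2 \<partial>M)
      = (\<integral>x. (\<Sum>n\<in>I. \<Sum>m\<in>I. a n * a m * (v n x * v m x)) \<partial>M)"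
    by (simp add: power2_eq_square sum_product algebra_simps)
  also have "\<dots> = (\<Sum>n\<in>I. \<Sum>m\<in>I. a n * a m * L2_inner M (v n) (v m))"
    unfolding L2_inner_def using L2_integrable_mult[OF v_L2 v_L2] by (simp add: integral_sum)
  also have "\<dots> = (\<Sum>n\<in>I. (a n)\<^sup>2)"
    using \<open>finite I\<close> by (simp add: v_orthonormal power2_eq_square if_distrib cong: if_cong)
  finally show ?thesis .
qed

lemma AE_abs_le_Linf_norm:
  assumes "f \<in> Linf M"
  shows "AE x in M. \<bar>f x\<bar> \<le> Linf_norm M f"
  using esssup_AE[of "\<lambda>x. ereal \<bar>f x\<bar>" M]
proof eventually_elim
  case (elim x)
  then show ?case
    using assms unfolding Linf_def Linf_norm_def
    by (cases "esssup M (\<lambda>x. ereal \<bar>f x\<bar>)") auto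
qed

lemma Linf_AE_bounded:
  assumes "f \<in> borel_measurable M" "AE x in M. \<bar>f x\<bar> \<le> B" "0 \<le> B"
  shows "f \<in> Linf M" and "Linf_norm M f \<le> B"
proof -
  have esssup: "esssup M (\<lambda>x. ereal \<bar>f x\<bar>) \<le> ereal B"
    using assms(1,2) by (intro esssup_I) auto
  then show "f \<in> Linf M"
    unfolding Linf_def using assms(1) by (auto intro: le_less_trans)
  show "Linf_norm M f \<le> B"
    unfolding Linf_norm_def using esssup \<open>0 \<le> B\<close>
    by (cases "esssup M (\<lambda>x. ereal \<bar>f x\<bar>)") auto
qed

lemma nn_integral_square_le_liminf:
  fixes f :: "'a \<Rightarrow> real"
  assumes meas: "\<And>K. g K \<in> borel_measurable M"
    and conv: "AE x in M. (\<lambda>K. g K x) \<longlonglongrightarrow> f x"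
  shows "(\<integral>\<^sup>+x. ennreal ((f x)\<^sup>2) \<partial>M) \<le> liminf (\<lambda>K. \<integral>\<^sup>+x. ennreal ((g K x)\<^sup>2) \<partial>M)"
proof -
  have "(\<integral>\<^sup>+x. ennreal ((f x)\<^sup>2) \<partial>M) = (\<integral>\<^sup>+x. liminf (\<lambda>K. ennreal ((g K x)\<^sup>2)) \<partial>M)"
    using conv
  proof (intro nn_integral_cong_AE, eventually_elim)
    case (elim x)
    then have "(\<lambda>K. ennreal ((g K x)\<^sup>2)) \<longlonglongrightarrow> ennreal ((f x)\<^sup>2)"
      by (intro tendsto_ennrealI tendsto_intros)
    then show ?case
      by (intro lim_imp_Liminf[symmetric]) auto
  qed
  also have "\<dots> \<le> liminf (\<lambda>K. \<integral>\<^sup>+x. ennreal ((g K x)\<^sup>2) \<partial>M)"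
    using meas by (intro nn_integral_liminf) measurable
  finally show ?thesis .
qed

lemma L2_limit_AE_abs_le:
  assumes lim: "L2_limit M S f"
    and S_L2: "\<And>N. S N \<in> L2 M"
    and bound: "AE x in M. \<forall>N. \<bar>S N x\<bar> \<le> B"
  shows "AE x in M. \<bar>f x\<bar> \<le> B"
proof -
  have f_L2: "f \<in> L2 M" and conv: "(\<lambda>N. \<integral>x. (f x - S N x)\<^sup>2 \<partial>M) \<longlonglongrightarrow> 0"
    using lim unfolding L2_limit_def by auto
  define g where "g x = ennreal ((max 0 (\<bar>f x\<bar> - B))\<^sup>2)" for x
  have [measurable]: "f \<in> borel_measurable M"
    using f_L2 unfolding L2_def by simp
  have g_meas: "g \<in> borel_measurable M"
    unfolding g_def by measurable
  have g_le: "integral\<^sup>N M g \<le> ennreal (\<integral>x. (f x - S N x)\<^sup>2 \<partial>M)" for N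
  proof -
    have "integral\<^sup>N M g \<le> (\<integral>\<^sup>+x. ennreal ((f x - S N x)\<^sup>2) \<partial>M)"
      using bound
    proof (intro nn_integral_mono_AE, eventually_elim)
      case (elim x)
      then have "max 0 (\<bar>f x\<bar> - B) \<le> \<bar>f x - S N x\<bar>"
        by (auto dest: spec[of _ N])
      then show ?case
        unfolding g_def by (intro ennreal_leI) (metis max.cobounded1 power2_abs power_mono)
    qed
    also have "\<dots> = ennreal (\<integral>x. (f x - S N x)\<^sup>2 \<partial>M)"
      using L2_integrable_square_diff[OF f_L2 S_L2] by (intro nn_integral_eq_integral) auto
    finally show ?thesis .
  qed
  have "integral\<^sup>N M g \<le> ennreal 0"
    by (rule LIMSEQ_le_const[OF tendsto_ennrealI[OF conv]]) (use g_le in auto)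
  then have "AE x in M. g x = 0"
    using nn_integral_0_iff_AE[OF g_meas] by simp
  then show ?thesis
    by eventually_elim (simp add: g_def)
qed

lemma L2_limit_series_Linf:
  assumes v_L2: "\<And>n. v n \<in> L2 M"
    and lim: "L2_limit M (\<lambda>N x. \<Sum>n<N. a n * v n x) f"
    and bound: "AE x in M. \<forall>N. (\<Sum>n<N. \<bar>a n * v n x\<bar>) \<le> B"
    and "0 \<le> B"
  shows "f \<in> Linf M" and "Linf_norm M f \<le> B"
proof -
  have "AE x in M. \<bar>f x\<bar> \<le> B"
  proof (rule L2_limit_AE_abs_le[OF lim])
    show "(\<lambda>x. \<Sum>n<N. a n * v n x) \<in> L2 M" for N
      using v_L2 by (rule L2_sum)
    show "AE x in M. \<forall>N. \<bar>\<Sum>n<N. a n * v n x\<bar> \<le> B"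
      using bound by eventually_elim (blast intro: order_trans[OF sum_abs])
  qed
  moreover have "f \<in> borel_measurable M"
    using lim unfolding L2_limit_def L2_def by simp
  ultimately show "f \<in> Linf M" and "Linf_norm M f \<le> B"
    using Linf_AE_bounded \<open>0 \<le> B\<close> by blast+
qed

lemma nn_integral_orthonormal_series_tail_le:
  assumes v_L2: "\<And>n. v n \<in> L2 M"
    and v_orthonormal: "\<And>n m. L2_inner M (v n) (v m) = (if n = m then 1 else 0)"
    and square_summable: "summable (\<lambda>n. (a n)\<^sup>2)"
    and conv: "AE x in M. (\<lambda>N. \<Sum>n<N. a n * v n x) \<longlonglongrightarrow> f x"
  shows "(\<integral>\<^sup>+x. ennreal ((f x - (\<Sum>n<N. a n * v n x))\<^sup>2) \<partial>M) \<le> ennreal (\<Sum>k. (a (k + N))\<^sup>2)"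
proof -
  define S where "S N x = (\<Sum>n<N. a n * v n x)" for N x
  have "S N \<in> L2 M" for N
    unfolding S_def[abs_def] using v_L2 by (rule L2_sum)
  then have [measurable]: "S N \<in> borel_measurable M" for N
    unfolding L2_def by simp
  have S_diff: "S (K + N) x - S N x = (\<Sum>k<K. a (k + N) * v (k + N) x)" for K x
    by (induction K) (simp_all add: S_def)
  have partial: "(\<integral>\<^sup>+x. ennreal ((S (K + N) x - S N x)\<^sup>2) \<partial>M) \<le> ennreal (\<Sum>k. (a (k + N))\<^sup>2)"
    for K
  proof -
    have "(\<integral>\<^sup>+x. ennreal ((S (K + N) x - S N x)\<^sup>2) \<partial>M)
        = ennreal (\<integral>x. (\<Sum>k<K. a (k + N) * v (k + N) x)\<^sup>2 \<partial>M)"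
      unfolding S_diff using L2_sum[of "{..<K}" "\<lambda>k. v (k + N)"] v_L2
      by (intro nn_integral_eq_integral) (auto simp: L2_def)
    also have "\<dots> = ennreal (\<Sum>k<K. (a (k + N))\<^sup>2)"
      using integral_square_orthonormal_sum[of "\<lambda>k. v (k + N)" M "{..<K}"] v_L2 v_orthonormal
      by simp
    also have "\<dots> \<le> ennreal (\<Sum>k. (a (k + N))\<^sup>2)"
      using summable_ignore_initial_segment[OF square_summable]
      by (intro ennreal_leI sum_le_suminf) auto
    finally show ?thesis .
  qed
  have "AE x in M. (\<lambda>K. S (K + N) x - S N x) \<longlonglongrightarrow> f x - S N x"
    using conv unfolding S_def[symmetric]
    by eventually_elim (rule tendsto_diff[OF LIMSEQ_ignore_initial_segment tendsto_const])
  then have "(\<integral>\<^sup>+x. ennreal ((f x - S N x)\<^sup>2) \<partial>M)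
      \<le> liminf (\<lambda>K. \<integral>\<^sup>+x. ennreal ((S (K + N) x - S N x)\<^sup>2) \<partial>M)"
    by (rule nn_integral_square_le_liminf[rotated]) measurable
  also have "\<dots> \<le> ennreal (\<Sum>k. (a (k + N))\<^sup>2)"
    using partial by (intro Liminf_le) auto
  finally show ?thesis
    unfolding S_def .
qed

lemma L2_limit_orthonormal_series:
  assumes v_L2: "\<And>n. v n \<in> L2 M"
    and v_orthonormal: "\<And>n m. L2_inner M (v n) (v m) = (if n = m then 1 else 0)"
    and square_summable: "summable (\<lambda>n. (a n)\<^sup>2)"
    and bound: "AE x in M. \<forall>N. (\<Sum>n<N. \<bar>a n * v n x\<bar>) \<le> B"
  shows "\<exists>f. L2_limit M (\<lambda>N x. \<Sum>n<N. a n * v n x) f"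
proof -
  define S where "S N x = (\<Sum>n<N. a n * v n x)" for N x
  have S_L2: "S N \<in> L2 M" for N
    unfolding S_def[abs_def] using v_L2 by (rule L2_sum)
  then have [measurable]: "S N \<in> borel_measurable M" for N
    unfolding L2_def by simp
  define f where "f x = lim (\<lambda>N. S N x)" for x
  have [measurable]: "f \<in> borel_measurable M"
    unfolding f_def[abs_def] by measurable
  have conv: "AE x in M. (\<lambda>N. S N x) \<longlonglongrightarrow> f x"
    using bound
  proof eventually_elim
    case (elim x)
    then have "summable (\<lambda>n. \<bar>a n * v n x\<bar>)"
      by (intro summableI_nonneg_bounded[where x=B]) auto
    then have "(\<lambda>N. S N x) \<longlonglongrightarrow> (\<Sum>n. a n * v n x)"
      unfolding S_def by (intro summable_LIMSEQ) (rule summable_rabs_cancel)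
    then show ?case
      unfolding f_def by (metis limI)
  qed
  define T where "T N = (\<Sum>k. (a (k + N))\<^sup>2)" for N
  have tail: "(\<integral>\<^sup>+x. ennreal ((f x - S N x)\<^sup>2) \<partial>M) \<le> ennreal (T N)" for N
    using nn_integral_orthonormal_series_tail_le[OF v_L2 v_orthonormal square_summable] conv
    unfolding S_def T_def by blast
  have "integrable M (\<lambda>x. (f x)\<^sup>2)"
    using le_less_trans[OF tail[of 0] ennreal_less_top]
    by (intro integrableI_bounded) (auto simp: S_def)
  then have f_L2: "f \<in> L2 M"
    unfolding L2_def by simp
  have dist_le: "(\<integral>x. (f x - S N x)\<^sup>2 \<partial>M) \<le> T N" for N
  proof -
    have "ennreal (\<integral>x. (f x - S N x)\<^sup>2 \<partial>M) = (\<integral>\<^sup>+x. ennreal ((f x - S N x)\<^sup>2) \<partial>M)"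
      using L2_integrable_square_diff[OF f_L2 S_L2] by (intro nn_integral_eq_integral[symmetric]) auto
    also have "\<dots> \<le> ennreal (T N)"
      by (rule tail)
    finally show ?thesis
      unfolding T_def
      using suminf_nonneg[OF summable_ignore_initial_segment[OF square_summable] zero_le_power2]
      by (simp add: ennreal_le_iff)
  qed
  have T_lim: "T \<longlonglongrightarrow> 0"
    unfolding T_def using square_summable by (rule suminf_exist_split2)
  have "(\<lambda>N. \<integral>x. (f x - S N x)\<^sup>2 \<partial>M) \<longlonglongrightarrow> 0"
    by (rule tendsto_sandwich[OF _ _ tendsto_const T_lim])
      (auto intro!: always_eventually integral_nonneg_AE dist_le)
  then show ?thesis
    using f_L2 unfolding L2_limit_def S_def by auto
qed

section \<open>Orthonormal systems in real inner product spaces\<close>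

lemma bessel_inequality:
  fixes u :: "nat \<Rightarrow> 'b::real_inner"
  assumes u_orthonormal: "\<And>n m. u n \<bullet> u m = (if n = m then 1 else 0)"
  shows "(\<Sum>n<N. (y \<bullet> u n)\<^sup>2) \<le> (norm y)\<^sup>2"
proof -
  define s where "s = (\<Sum>n<N. (y \<bullet> u n) *\<^sub>R u n)"
  have ys: "y \<bullet> s = (\<Sum>n<N. (y \<bullet> u n)\<^sup>2)"
    unfolding s_def by (simp add: inner_sum_right power2_eq_square)
  have ss: "s \<bullet> s = (\<Sum>n<N. (y \<bullet> u n)\<^sup>2)"
    unfolding s_def
    by (simp add: inner_sum_right inner_sum_left u_orthonormal power2_eq_square if_distrib cong: if_cong)
  have "0 \<le> (y - s) \<bullet> (y - s)"
    by simp
  also have "\<dots> = y \<bullet> y - 2 * (y \<bullet> s) + s \<bullet> s"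
    by (simp add: inner_diff_left inner_diff_right inner_commute)
  finally show ?thesis
    using ys ss by (simp add: power2_norm_eq_inner)
qed

lemma summable_inner_square:
  fixes u :: "nat \<Rightarrow> 'b::real_inner"
  assumes "\<And>n m. u n \<bullet> u m = (if n = m then 1 else 0)"
  shows "summable (\<lambda>n. (y \<bullet> u n)\<^sup>2)"
  using bessel_inequality[OF assms] by (intro summableI_nonneg_bounded) auto

lemma sum_abs_inner_mult_le:
  fixes u :: "nat \<Rightarrow> 'b::real_inner"
  assumes "\<And>n m. u n \<bullet> u m = (if n = m then 1 else 0)"
  shows "(\<Sum>n<N. \<bar>y \<bullet> u n\<bar> * b n) \<le> norm y * sqrt (\<Sum>n<N. (b n)\<^sup>2)"
proof -
  have "(\<Sum>n<N. \<bar>y \<bullet> u n\<bar> * b n)\<^sup>2 \<le> (\<Sum>n<N. (y \<bullet> u n)\<^sup>2) * (\<Sum>n<N. (b n)\<^sup>2)"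
    using Cauchy_Schwarz_ineq_sum[of "\<lambda>n. \<bar>y \<bullet> u n\<bar>" b] by simp
  also have "\<dots> \<le> (norm y)\<^sup>2 * (\<Sum>n<N. (b n)\<^sup>2)"
    using bessel_inequality[OF assms] by (intro mult_right_mono sum_nonneg) auto
  finally have "(\<Sum>n<N. \<bar>y \<bullet> u n\<bar> * b n) \<le> sqrt ((norm y)\<^sup>2 * (\<Sum>n<N. (b n)\<^sup>2))"
    by (rule real_le_rsqrt)
  then show ?thesis
    by (simp add: real_sqrt_mult)
qed

lemma summable_square_of_abs_le_inner:
  fixes u :: "nat \<Rightarrow> 'b::real_inner"
  assumes u_orthonormal: "\<And>n m. u n \<bullet> u m = (if n = m then 1 else 0)"
    and a_le: "\<And>n. \<bar>a n\<bar> \<le> D * \<bar>y \<bullet> u n\<bar>"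
  shows "summable (\<lambda>n. (a n)\<^sup>2)"
proof (rule summable_comparison_test)
  show "summable (\<lambda>n. D\<^sup>2 * (y \<bullet> u n)\<^sup>2)"
    using summable_inner_square[OF u_orthonormal] by (rule summable_mult)
  have "(a n)\<^sup>2 \<le> D\<^sup>2 * (y \<bullet> u n)\<^sup>2" for n
    using power_mono[OF a_le[of n] abs_ge_zero, of 2] by (simp add: power_mult_distrib)
  then show "\<exists>N. \<forall>n\<ge>N. norm ((a n)\<^sup>2) \<le> D\<^sup>2 * (y \<bullet> u n)\<^sup>2"
    by simp
qed

lemma sum_abs_mult_le_of_abs_le_inner:
  fixes u :: "nat \<Rightarrow> 'b::real_inner"
  assumes u_orthonormal: "\<And>n m. u n \<bullet> u m = (if n = m then 1 else 0)"
    and a_le: "\<And>n. \<bar>a n\<bar> \<le> r * \<bar>y \<bullet> u n\<bar> * w n"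
    and b_le: "\<And>n. \<bar>b n\<bar> \<le> L n"
    and "0 \<le> r" "\<And>n. 0 \<le> w n"
    and summable: "summable (\<lambda>n. (w n * L n)\<^sup>2)"
  shows "(\<Sum>n<N. \<bar>a n * b n\<bar>) \<le> r * norm y * sqrt (\<Sum>n. (w n * L n)\<^sup>2)"
proof -
  have "(\<Sum>n<N. \<bar>a n * b n\<bar>) \<le> (\<Sum>n<N. r * (\<bar>y \<bullet> u n\<bar> * (w n * L n)))"
  proof (rule sum_mono)
    fix n
    have "\<bar>a n\<bar> * \<bar>b n\<bar> \<le> r * \<bar>y \<bullet> u n\<bar> * w n * L n"
      using a_le[of n] b_le[of n] by (intro mult_mono) (auto intro: order_trans[OF abs_ge_zero])
    then show "\<bar>a n * b n\<bar> \<le> r * (\<bar>y \<bullet> u n\<bar> * (w n * L n))"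
      by (simp add: abs_mult mult.assoc)
  qed
  also have "\<dots> \<le> r * (norm y * sqrt (\<Sum>n<N. (w n * L n)\<^sup>2))"
    unfolding sum_distrib_left[symmetric] using \<open>0 \<le> r\<close>
    by (intro mult_left_mono sum_abs_inner_mult_le[OF u_orthonormal])
  also have "\<dots> \<le> r * (norm y * sqrt (\<Sum>n. (w n * L n)\<^sup>2))"
    using summable \<open>0 \<le> r\<close>
    by (intro mult_left_mono real_sqrt_le_mono sum_le_suminf) auto
  finally show ?thesis
    by (simp add: mult.assoc)
qed

section \<open>The Tikhonov-type filter\<close>

lemma power2_eq_powr_mult_powr:
  fixes s \<eta> :: real
  assumes "0 < s"
  shows "s\<^sup>2 = s powr (2 - \<eta>) * s powr \<eta>"
  using assms by (metis diff_add_cancel powr_add powr_numeral less_imp_le)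

lemma square_ratio_le_of_ge_const:
  fixes s s\<^sub>0 c c\<^sub>0 \<eta> :: real
  assumes "0 < s" "s \<le> s\<^sub>0" "\<eta> \<le> 2" "0 < c\<^sub>0" "c\<^sub>0 \<le> c"
  shows "(s / c)\<^sup>2 \<le> s\<^sub>0 powr (2 - \<eta>) / c\<^sub>0\<^sup>2 * s powr \<eta>"
proof -
  have "s\<^sup>2 \<le> s\<^sub>0 powr (2 - \<eta>) * s powr \<eta>"
    unfolding power2_eq_powr_mult_powr[OF \<open>0 < s\<close>, of \<eta>]
    using assms by (intro mult_right_mono powr_mono2) auto
  then have "s\<^sup>2 / c\<^sup>2 \<le> s\<^sub>0 powr (2 - \<eta>) * s powr \<eta> / c\<^sub>0\<^sup>2"
    using assms by (intro frac_le power_mono) auto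
  then show ?thesis
    by (simp add: power_divide)
qed

lemma square_ratio_le_of_ge_powr:
  fixes s c C \<eta> :: real
  assumes "0 < s" "0 < C" "C * s powr (1 - \<eta> / 2) \<le> c"
  shows "(s / c)\<^sup>2 \<le> s powr \<eta> / C\<^sup>2"
proof -
  have "(s powr (1 - \<eta> / 2))\<^sup>2 = s powr ((1 - \<eta> / 2) + (1 - \<eta> / 2))"
    by (simp only: power2_eq_square powr_add)
  also have "(1 - \<eta> / 2) + (1 - \<eta> / 2) = 2 - \<eta>"
    by simp
  finally have C_square: "(C * s powr (1 - \<eta> / 2))\<^sup>2 = C\<^sup>2 * s powr (2 - \<eta>)"
    by (simp add: power_mult_distrib)
  have "0 < C * s powr (1 - \<eta> / 2)"
    using assms by simp
  then have "(s / c)\<^sup>2 \<le> s\<^sup>2 / (C * s powr (1 - \<eta> / 2))\<^sup>2"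
    unfolding power_divide using assms by (intro frac_le power_mono) auto
  also have "\<dots> = s powr \<eta> / C\<^sup>2"
    unfolding C_square power2_eq_powr_mult_powr[OF \<open>0 < s\<close>, of \<eta>] using \<open>0 < s\<close> by simp
  finally show ?thesis .
qed

lemma exists_square_ratio_le_powr:
  fixes \<sigma> c :: "nat \<Rightarrow> real" and \<eta> :: real
  assumes \<sigma>_pos: "\<And>n. \<sigma> n > 0"
    and \<sigma>_noninc: "decseq \<sigma>"
    and c_cases: "(\<eta> \<le> 2 \<and> (\<exists>c\<^sub>0>0. \<forall>n. c n \<ge> c\<^sub>0)) \<or>
                  (\<eta> > 2 \<and> (\<exists>C>0. \<forall>n. c n \<ge> C * \<sigma> n powr (1 - \<eta> / 2)))"
  shows "\<exists>K>0. \<forall>n. 0 < c n \<and> (\<sigma> n / c n)\<^sup>2 \<le> K * \<sigma> n powr \<eta>"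
  using c_cases
proof
  assume "\<eta> \<le> 2 \<and> (\<exists>c\<^sub>0>0. \<forall>n. c n \<ge> c\<^sub>0)"
  then obtain c\<^sub>0 where "\<eta> \<le> 2" "0 < c\<^sub>0" "\<And>n. c\<^sub>0 \<le> c n"
    by auto
  moreover have "\<sigma> n \<le> \<sigma> 0" for n
    using \<sigma>_noninc by (simp add: decseq_def)
  ultimately have "0 < c n \<and> (\<sigma> n / c n)\<^sup>2 \<le> \<sigma> 0 powr (2 - \<eta>) / c\<^sub>0\<^sup>2 * \<sigma> n powr \<eta>" for n
    using \<sigma>_pos square_ratio_le_of_ge_const by (meson less_le_trans)
  moreover have "0 < \<sigma> 0 powr (2 - \<eta>) / c\<^sub>0\<^sup>2"
    using \<sigma>_pos[of 0] \<open>0 < c\<^sub>0\<close> by simp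
  ultimately show ?thesis
    by blast
next
  assume "\<eta> > 2 \<and> (\<exists>C>0. \<forall>n. c n \<ge> C * \<sigma> n powr (1 - \<eta> / 2))"
  then obtain C where "0 < C" "\<And>n. C * \<sigma> n powr (1 - \<eta> / 2) \<le> c n"
    by auto
  moreover have "0 < C * \<sigma> n powr (1 - \<eta> / 2)" for n
    using \<sigma>_pos[of n] \<open>0 < C\<close> by simp
  ultimately have "0 < c n \<and> (\<sigma> n / c n)\<^sup>2 \<le> 1 / C\<^sup>2 * \<sigma> n powr \<eta>" for n
    using \<sigma>_pos square_ratio_le_of_ge_powr by (metis less_le_trans times_divide_eq_left mult_1)
  moreover have "0 < 1 / C\<^sup>2"
    using \<open>0 < C\<close> by simp
  ultimately show ?thesis
    by blast
qed

lemma ratio_le_sqrt_of_square_le_powr: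
  fixes \<sigma> c :: "nat \<Rightarrow> real"
  assumes "decseq \<sigma>" "\<And>n. 0 < \<sigma> n" "0 \<le> \<eta>" "0 \<le> K"
    and "(\<sigma> n / c n)\<^sup>2 \<le> K * \<sigma> n powr \<eta>"
  shows "\<sigma> n / c n \<le> sqrt (K * \<sigma> 0 powr \<eta>)"
proof (rule real_le_rsqrt)
  have "\<sigma> n powr \<eta> \<le> \<sigma> 0 powr \<eta>"
    using assms(1,3) less_imp_le[OF assms(2)[of n]] by (intro powr_mono2) (auto simp: decseq_def)
  then show "(\<sigma> n / c n)\<^sup>2 \<le> K * \<sigma> 0 powr \<eta>"
    using assms(4,5) by (meson mult_left_mono order_trans)
qed

lemma summable_square_mult_le:
  fixes w s L :: "nat \<Rightarrow> real"
  assumes "summable (\<lambda>n. s n * (L n)\<^sup>2)" and "\<And>n. (w n)\<^sup>2 \<le> K * s n"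
  shows "summable (\<lambda>n. (w n * L n)\<^sup>2)"
proof (rule summable_comparison_test)
  show "summable (\<lambda>n. K * (s n * (L n)\<^sup>2))"
    using assms(1) by (rule summable_mult)
  have "(w n * L n)\<^sup>2 \<le> K * (s n * (L n)\<^sup>2)" for n
    using mult_right_mono[OF assms(2)[of n] zero_le_power2[of "L n"]]
    by (simp add: power_mult_distrib mult.assoc)
  then show "\<exists>N. \<forall>n\<ge>N. norm ((w n * L n)\<^sup>2) \<le> K * (s n * (L n)\<^sup>2)"
    by simp
qed

lemma abs_tikhonov_coeff_le:
  fixes \<sigma> c \<alpha> t :: real
  assumes "0 < \<sigma>" "0 < c" "0 < \<alpha>"
  shows "\<bar>\<sigma> / (\<sigma>\<^sup>2 + \<alpha> * c) * t\<bar> \<le> 1 / \<alpha> * \<bar>t\<bar> * (\<sigma> / c)"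
proof -
  have pos: "0 < \<alpha> * c" "0 < \<sigma>\<^sup>2 + \<alpha> * c"
    using assms by (simp_all add: add_nonneg_pos)
  then have "\<bar>\<sigma> / (\<sigma>\<^sup>2 + \<alpha> * c) * t\<bar> = \<sigma> / (\<sigma>\<^sup>2 + \<alpha> * c) * \<bar>t\<bar>"
    using \<open>0 < \<sigma>\<close> by (simp add: abs_mult)
  also have "\<dots> \<le> \<sigma> / (\<alpha> * c) * \<bar>t\<bar>"
    using pos \<open>0 < \<sigma>\<close> by (intro mult_right_mono divide_left_mono) (auto intro: mult_pos_pos)
  also have "\<dots> = 1 / \<alpha> * \<bar>t\<bar> * (\<sigma> / c)"
    by simp
  finally show ?thesis .
qed

lemma Tc_rep_exists_Linf_norm_le:
  fixes u :: "nat \<Rightarrow> 'b::real_inner"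
  assumes u_orthonormal: "\<And>n m. u n \<bullet> u m = (if n = m then 1 else 0)"
    and v_L2: "\<And>n. v n \<in> L2 M"
    and v_orthonormal: "\<And>n m. L2_inner M (v n) (v m) = (if n = m then 1 else 0)"
    and v_bound: "AE x in M. \<forall>n. \<bar>v n x\<bar> \<le> L n"
    and \<sigma>_pos: "\<And>n. 0 < \<sigma> n"
    and c_pos: "\<And>n. 0 < c n"
    and ratio_bounded: "\<And>n. \<sigma> n / c n \<le> D"
    and weighted_summable: "summable (\<lambda>n. (\<sigma> n / c n * L n)\<^sup>2)"
    and C_ge: "sqrt (\<Sum>n. (\<sigma> n / c n * L n)\<^sup>2) \<le> C"
    and "0 < \<alpha>"
  shows "\<exists>f. Tc_rep M \<sigma> u v c \<alpha> y f"
    and "Tc_rep M \<sigma> u v c \<alpha> y f \<Longrightarrow> f \<in> Linf M \<and> Linf_norm M f \<le> C / \<alpha> * norm y"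
proof -
  define a where "a n = \<sigma> n / ((\<sigma> n)\<^sup>2 + \<alpha> * c n) * (y \<bullet> u n)" for n
  have a_le: "\<bar>a n\<bar> \<le> 1 / \<alpha> * \<bar>y \<bullet> u n\<bar> * (\<sigma> n / c n)" for n
    unfolding a_def using \<sigma>_pos c_pos \<open>0 < \<alpha>\<close> by (rule abs_tikhonov_coeff_le)
  have "\<bar>a n\<bar> \<le> D / \<alpha> * \<bar>y \<bullet> u n\<bar>" for n
    using order_trans[OF a_le mult_left_mono[OF ratio_bounded]] \<open>0 < \<alpha>\<close> by (simp add: mult.commute)
  then have "summable (\<lambda>n. (a n)\<^sup>2)"
    by (rule summable_square_of_abs_le_inner[OF u_orthonormal])
  moreover have bound: "AE x in M. \<forall>N. (\<Sum>n<N. \<bar>a n * v n x\<bar>) \<le> C / \<alpha> * norm y"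
    using v_bound
  proof (eventually_elim, intro allI)
    fix x N
    assume "\<forall>n. \<bar>v n x\<bar> \<le> L n"
    then have "(\<Sum>n<N. \<bar>a n * v n x\<bar>) \<le> 1 / \<alpha> * norm y * sqrt (\<Sum>n. (\<sigma> n / c n * L n)\<^sup>2)"
      using \<sigma>_pos c_pos \<open>0 < \<alpha>\<close> weighted_summable
      by (intro sum_abs_mult_le_of_abs_le_inner[OF u_orthonormal a_le]) (auto intro: less_imp_le)
    also have "\<dots> \<le> 1 / \<alpha> * norm y * C"
      using C_ge \<open>0 < \<alpha>\<close> by (intro mult_left_mono) auto
    also have "\<dots> = C / \<alpha> * norm y"
      by simp
    finally show "(\<Sum>n<N. \<bar>a n * v n x\<bar>) \<le> C / \<alpha> * norm y" .
  qed
  ultimately show "\<exists>f. Tc_rep M \<sigma> u v c \<alpha> y f"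
    unfolding Tc_rep_def a_def[symmetric] using L2_limit_orthonormal_series[OF v_L2 v_orthonormal]
    by blast
  have "0 \<le> C"
    using C_ge real_sqrt_ge_zero[OF suminf_nonneg[OF weighted_summable zero_le_power2]] by linarith
  moreover assume "Tc_rep M \<sigma> u v c \<alpha> y f"
  then have "L2_limit M (\<lambda>N x. \<Sum>n<N. a n * v n x) f"
    unfolding Tc_rep_def a_def .
  ultimately show "f \<in> Linf M \<and> Linf_norm M f \<le> C / \<alpha> * norm y"
    using L2_limit_series_Linf[OF v_L2 _ bound] \<open>0 < \<alpha>\<close> by simp
qed

theorem proposition4p13:
  fixes M :: "'a measure"
    and A :: "('a \<Rightarrow> real) \<Rightarrow> 'b :: {real_inner, complete_space}"
    and \<sigma> :: "nat \<Rightarrow> real"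
    and u :: "nat \<Rightarrow> 'b"
    and v :: "nat \<Rightarrow> 'a \<Rightarrow> real"
    and \<eta> :: real
    and c :: "nat \<Rightarrow> real"
  assumes Y_separable: "separable_space (euclidean :: 'b topology)"
    and X_separable: "L2_separable M"
    and u_orthonormal: "\<And>n m. u n \<bullet> u m = (if n = m then 1 else 0)"
    and v_L2: "\<And>n. v n \<in> L2 M"
    and v_orthonormal: "\<And>n m. L2_inner M (v n) (v m) = (if n = m then 1 else 0)"
    and \<sigma>_pos: "\<And>n. \<sigma> n > 0"
    and \<sigma>_noninc: "decseq \<sigma>"
    and \<sigma>_lim: "\<sigma> \<longlonglongrightarrow> 0"
    and A_svd: "\<And>x. x \<in> L2 M \<Longrightarrow> (\<lambda>n. (\<sigma> n * L2_inner M x (v n)) *\<^sub>R u n) sums A x"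
    and v_Linf: "\<And>n. v n \<in> Linf M"
    and \<eta>_pos: "\<eta> > 0"
    and summable: "summable (\<lambda>n. \<sigma> n powr \<eta> * (Linf_norm M (v n))\<^sup>2)"
    and c_cases: "(\<eta> \<le> 2 \<and> (\<exists>c\<^sub>0>0. \<forall>n. c n \<ge> c\<^sub>0)) \<or>
                  (\<eta> > 2 \<and> (\<exists>C>0. \<forall>n. c n \<ge> C * \<sigma> n powr (1 - \<eta> / 2)))"
  shows "\<exists>C'>0. \<forall>\<alpha>>0. \<forall>y::'b.
           (\<exists>f. Tc_rep M \<sigma> u v c \<alpha> y f) \<and>
           (\<forall>f. Tc_rep M \<sigma> u v c \<alpha> y f \<longrightarrow>
                 f \<in> Linf M \<and> Linf_norm M f \<le> C' / \<alpha> * norm y)"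
proof -
  obtain K where "0 < K" and K: "\<And>n. 0 < c n \<and> (\<sigma> n / c n)\<^sup>2 \<le> K * \<sigma> n powr \<eta>"
    using exists_square_ratio_le_powr[OF \<sigma>_pos \<sigma>_noninc c_cases] by blast
  define L where "L n = Linf_norm M (v n)" for n
  have v_bound: "AE x in M. \<forall>n. \<bar>v n x\<bar> \<le> L n"
    unfolding L_def AE_all_countable using v_Linf by (blast intro: AE_abs_le_Linf_norm)
  have ratio_bounded: "\<sigma> n / c n \<le> sqrt (K * \<sigma> 0 powr \<eta>)" for n
    using \<sigma>_noninc \<sigma>_pos \<eta>_pos \<open>0 < K\<close> K by (intro ratio_le_sqrt_of_square_le_powr) auto
  have weighted_summable: "summable (\<lambda>n. (\<sigma> n / c n * L n)\<^sup>2)"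
    using summable K unfolding L_def by (intro summable_square_mult_le) auto
  define C' where "C' = sqrt (\<Sum>n. (\<sigma> n / c n * L n)\<^sup>2) + 1"
  have "0 < C'"
    unfolding C'_def using suminf_nonneg[OF weighted_summable] by (simp add: add_nonneg_pos)
  moreover have "sqrt (\<Sum>n. (\<sigma> n / c n * L n)\<^sup>2) \<le> C'"
    unfolding C'_def by simp
  moreover have "0 < c n" for n
    using K by blast
  ultimately show ?thesis
    using Tc_rep_exists_Linf_norm_le[OF u_orthonormal v_L2 v_orthonormal v_bound \<sigma>_pos _
        ratio_bounded weighted_summable]
    by blast
qed

end
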